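(* Let $\mathcal{S}$ be finite, $\Pi$ irreducible stochastic on $\mathcal{S}$, $\kappa(x,y):=\pi_{xy}-\mathbf{1}_{x=y}$, $\mathcal{K}=\Pi-\mathrm{I}$, $Q=(q(y))$ the invariant distribution, and assume detailed balance $q(y)\kappa(y,z)=q(z)\kappa(z,y)$ for all $y,z$. Let $\Phi:(0,\infty)\to\mathbb{R}$ be convex, continuously differentiable with continuous strictly positive second derivative, $\Phi(1)=0$, $\varphi:=\Phi'$. Let $P\in\mathcal{M}$ with likelihood ratio vector $\boldsymbol{\ell}=P/Q$. Then along any smooth curve $(\widetilde P_t)_{0\le t<\infty}\subset\mathcal{M}$ with $\widetilde P_0=P$ and induced likelihood ratios $\widetilde\ell_t=\widetilde P_t/Q$, $$\Big(2\,\partial_tH^\Phi(\widetilde P_t\,|\,Q)+\big\|\partial_t\widetilde\ell_t\big\|^2_{\mathbb{H}^{-1}_\Theta(\mathcal{S},\boldsymbol{\ell}Q)}\Big)\Big|_{t=0}\ \ge\ -\big\|\varphi(\boldsymbol{\ell})\big\|^2_{\mathbb{H}^1_\Theta(\mathcal{S},\boldsymbol{\ell}Q)} .$$ Equality holds if and only if the curve satisfies the forward equation $\partial_t\widetilde P_t=\mathcal{K}'\widetilde P_t$ (equivalently, $\partial_t\widetilde\ell_t=\mathcal{K}\widetilde\ell_t$, with driver $f_t=-\varphi(\widetilde\ell_t)$ in the continuity equation $\partial_t\widetilde\ell_t+\nabla\cdot(\vartheta_{\widetilde\ell_t}\nabla f_t)=0$).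
   Context: $\mathcal{M}$: probability vectors on $\mathcal{S}$ with strictly positive entries; $\mathcal{K}'$ is the transpose of $\mathcal{K}$. $H^\Phi(P\,|\,Q):=\sum_yq(y)\Phi(p(y)/q(y))$. $\mathcal{Z}:=\{(x,y):\kappa(x,y)>0\}$, $c(x,y):=\frac12\kappa(x,y)q(x)$, $\nabla f(x,y):=f(y)-f(x)$, $(\nabla\cdot F)(x):=\frac12\sum_{y\ne x}\kappa(x,y)[F(x,y)-F(y,x)]$; $\Theta^\Phi(a,b):=\frac{a-b}{\varphi(a)-\varphi(b)}$ for $a\ne b$, $\Theta^\Phi(b,b):=1/\Phi''(b)$; $\vartheta_\ell(x,y):=\Theta^\Phi(\ell(x),\ell(y))$; $\|f\|^2_{\mathbb{H}^1_\Theta(\mathcal{S},\ell Q)}:=\sum_{(x,y)\in\mathcal{Z}}c(x,y)\vartheta_\ell(x,y)(\nabla f(x,y))^2$; $\|f\|_{\mathbb{H}^{-1}_\Theta(\mathcal{S},\ell Q)}:=\sup_{g}\frac{\sum_xq(x)f(x)g(x)}{\|g\|_{\mathbb{H}^1_\Theta(\mathcal{S},\ell Q)}}$. *)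

theory Defs
  imports "HOL-Analysis.Analysis"
begin

definition kappa :: "('a \<Rightarrow> 'a \<Rightarrow> real) \<Rightarrow> 'a \<Rightarrow> 'a \<Rightarrow> real" where
  "kappa Pm x y = Pm x y - (if x = y then 1 else 0)"

definition stochastic :: "('a::finite \<Rightarrow> 'a \<Rightarrow> real) \<Rightarrow> bool" where
  "stochastic Pm \<longleftrightarrow> (\<forall>x y. Pm x y \<ge> 0) \<and> (\<forall>x. (\<Sum>y\<in>UNIV. Pm x y) = 1)"

definition irreducible_chain :: "('a \<Rightarrow> 'a \<Rightarrow> real) \<Rightarrow> bool" where
  "irreducible_chain Pm \<longleftrightarrow> (\<forall>x y. (x, y) \<in> {(u, v). Pm u v > 0}\<^sup>+)"

definition invariant_distribution :: "('a::finite \<Rightarrow> 'a \<Rightarrow> real) \<Rightarrow> ('a \<Rightarrow> real) \<Rightarrow> bool" where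
  "invariant_distribution Pm q \<longleftrightarrow> (\<forall>y. q y \<ge> 0) \<and> (\<Sum>y\<in>UNIV. q y) = 1
      \<and> (\<forall>y. (\<Sum>x\<in>UNIV. q x * Pm x y) = q y)"

definition probM :: "('a::finite \<Rightarrow> real) set" where
  "probM = {p. (\<forall>y. p y > 0) \<and> (\<Sum>y\<in>UNIV. p y) = 1}"

definition Hphi :: "(real \<Rightarrow> real) \<Rightarrow> ('a::finite \<Rightarrow> real) \<Rightarrow> ('a \<Rightarrow> real) \<Rightarrow> real" where
  "Hphi Phi p q = (\<Sum>y\<in>UNIV. q y * Phi (p y / q y))"

text \<open>Theta^Phi(a,b); phi = Phi', phi2 = Phi''.\<close>
definition Theta :: "(real \<Rightarrow> real) \<Rightarrow> (real \<Rightarrow> real) \<Rightarrow> real \<Rightarrow> real \<Rightarrow> real" where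
  "Theta phi phi2 a b = (if a = b then 1 / phi2 b else (a - b) / (phi a - phi b))"

definition H1sq :: "('a::finite \<Rightarrow> 'a \<Rightarrow> real) \<Rightarrow> ('a \<Rightarrow> real) \<Rightarrow> (real \<Rightarrow> real) \<Rightarrow> (real \<Rightarrow> real)
     \<Rightarrow> ('a \<Rightarrow> real) \<Rightarrow> ('a \<Rightarrow> real) \<Rightarrow> real" where
  "H1sq Pm q phi phi2 l f =
     (\<Sum>(x, y)\<in>{(x, y). kappa Pm x y > 0}.
        (1/2) * kappa Pm x y * q x * Theta phi phi2 (l x) (l y) * (f y - f x)^2)"

definition H1norm where
  "H1norm Pm q phi phi2 l f = sqrt (H1sq Pm q phi phi2 l f)"

text \<open>H^{-1}_Theta(S, l Q) norm as the supremum of the dual pairing over all g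
  (in Isabelle x/0 = 0, so g with vanishing H^1 seminorm contribute 0).\<close>
definition Hm1norm :: "('a::finite \<Rightarrow> 'a \<Rightarrow> real) \<Rightarrow> ('a \<Rightarrow> real) \<Rightarrow> (real \<Rightarrow> real) \<Rightarrow> (real \<Rightarrow> real)
     \<Rightarrow> ('a \<Rightarrow> real) \<Rightarrow> ('a \<Rightarrow> real) \<Rightarrow> real" where
  "Hm1norm Pm q phi phi2 l f =
     Sup {(\<Sum>x\<in>UNIV. q x * f x * g x) / H1norm Pm q phi phi2 l g | g. True}"

end

theory Submission
  imports Defs
begin

text \<open>
  Let \<open>B\<close> be the Dirichlet form with edge weights \<open>c \<vartheta>\<^sub>l\<close>, \<open>g = \<phi>(l)\<close> and
  \<open>A h = \<Sum>\<^sub>x \<partial>\<^sub>tP(x) h(x)\<close>. The chain rule gives \<open>\<partial>\<^sub>tH = A g\<close>, and since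
  \<open>\<vartheta>\<^sub>l \<nabla>g = \<nabla>l\<close>, summation by parts under detailed balance gives
  \<open>B(g, h) = - \<Sum>\<^sub>x (\<K>'P)(x) h(x)\<close>. The \<open>H\<^sup>-\<^sup>1\<close> norm \<open>N\<close> of \<open>\<partial>\<^sub>tl\<close> is the dual norm
  of \<open>A\<close> with respect to \<open>B\<close>, so \<open>2 A h - B(h, h) \<le> N\<^sup>2\<close> for every \<open>h\<close>; the choice
  \<open>h = -g\<close> is the inequality. If \<open>\<partial>\<^sub>tP = \<K>'P\<close>, then \<open>A = B(-g, \<cdot>)\<close> and Cauchy-Schwarz gives
  \<open>N\<^sup>2 = B(g, g)\<close>, hence equality. Otherwise \<open>h = -g + t v\<close> with \<open>v = \<partial>\<^sub>tP - \<K>'P\<close>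
  gains \<open>2 t |v|\<^sup>2 - O(t\<^sup>2)\<close> over \<open>h = -g\<close>, which rules out equality.

  Irreducibility is needed only to make \<open>q\<close> positive and \<open>N\<close> finite (functionals of zero
  mass are bounded by the energy along paths of the chain).
\<close>

definition dirichlet_form ::
    "('a \<times> 'a) set \<Rightarrow> ('a \<Rightarrow> 'a \<Rightarrow> real) \<Rightarrow> ('a \<Rightarrow> real) \<Rightarrow> ('a \<Rightarrow> real) \<Rightarrow> real" where
  "dirichlet_form E W f g = (\<Sum>(x, y)\<in>E. W x y * (f y - f x) * (g y - g x))"

lemma dirichlet_form_commute: "dirichlet_form E W f g = dirichlet_form E W g f"
  unfolding dirichlet_form_def by (rule sum.cong) (auto simp: algebra_simps)

lemma dirichlet_form_linear_left:
  "dirichlet_form E W (\<lambda>x. a * f x + b * g x) h = a * dirichlet_form E W f h + b * dirichlet_form E W g h"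
proof -
  have "\<And>x y. W x y * ((a * f y + b * g y) - (a * f x + b * g x)) * (h y - h x)
      = a * (W x y * (f y - f x) * (h y - h x)) + b * (W x y * (g y - g x) * (h y - h x))"
    by (simp add: algebra_simps)
  then show ?thesis
    unfolding dirichlet_form_def by (simp add: sum_distrib_left sum.distrib split_def)
qed

lemma dirichlet_form_quadratic:
  "dirichlet_form E W (\<lambda>x. a * f x + b * g x) (\<lambda>x. a * f x + b * g x)
     = a^2 * dirichlet_form E W f f + 2 * a * b * dirichlet_form E W f g + b^2 * dirichlet_form E W g g"
  by (simp add: dirichlet_form_linear_left dirichlet_form_commute[of E W _ "\<lambda>x. a * f x + b * g x"]
      dirichlet_form_commute[of E W g f] power2_eq_square algebra_simps)

lemma dirichlet_form_change_weight:
  assumes "\<And>x y. (x, y) \<in> E \<Longrightarrow> W x y * (g y - g x) = W' x y * (f y - f x)"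
  shows "dirichlet_form E W g h = dirichlet_form E W' f h"
  unfolding dirichlet_form_def by (rule sum.cong) (use assms in auto)

lemma dirichlet_form_nonneg:
  assumes "\<And>x y. (x, y) \<in> E \<Longrightarrow> W x y \<ge> 0"
  shows "dirichlet_form E W f f \<ge> 0"
  unfolding dirichlet_form_def
  by (rule sum_nonneg) (auto simp: mult.assoc intro!: mult_nonneg_nonneg assms zero_le_square)

lemma dirichlet_form_Cauchy_Schwarz:
  assumes "\<And>x y. (x, y) \<in> E \<Longrightarrow> W x y \<ge> 0"
  shows "(dirichlet_form E W f g)^2 \<le> dirichlet_form E W f f * dirichlet_form E W g g"
proof -
  define df where "df = (\<lambda>(x, y). sqrt (W x y) * (f y - f x))"
  define dg where "dg = (\<lambda>(x, y). sqrt (W x y) * (g y - g x))"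
  have "(\<Sum>i\<in>E. df i * dg i)^2 \<le> (\<Sum>i\<in>E. (df i)^2) * (\<Sum>i\<in>E. (dg i)^2)"
    by (rule Cauchy_Schwarz_ineq_sum)
  moreover have "(\<Sum>i\<in>E. df i * dg i) = dirichlet_form E W f g"
    "(\<Sum>i\<in>E. (df i)^2) = dirichlet_form E W f f" "(\<Sum>i\<in>E. (dg i)^2) = dirichlet_form E W g g"
    unfolding dirichlet_form_def df_def dg_def
    by (auto intro!: sum.cong simp: assms power_mult_distrib power2_eq_square)
  ultimately show ?thesis by simp
qed

lemma dirichlet_form_edge_bound:
  assumes "finite E" "\<And>x y. (x, y) \<in> E \<Longrightarrow> W x y \<ge> 0" "(u, v) \<in> E" "W u v > 0"
  shows "\<bar>f v - f u\<bar> \<le> 1 / sqrt (W u v) * sqrt (dirichlet_form E W f f)"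
proof -
  have "W u v * (f v - f u)^2 \<le> dirichlet_form E W f f"
    unfolding dirichlet_form_def power2_eq_square mult.assoc
    using member_le_sum[of "(u, v)" E "\<lambda>(x, y). W x y * ((f y - f x) * (f y - f x))"] assms
    by auto
  then have "sqrt ((f v - f u)^2) \<le> sqrt (dirichlet_form E W f f / W u v)"
    using assms(4) by (intro real_sqrt_le_mono) (simp add: le_divide_eq mult.commute)
  then show ?thesis by (simp add: real_sqrt_divide)
qed

definition dual_norm :: "(('a \<Rightarrow> real) \<Rightarrow> real) \<Rightarrow> (('a \<Rightarrow> real) \<Rightarrow> real) \<Rightarrow> real" where
  "dual_norm Q A = Sup {A h / sqrt (Q h) | h. True}"

context
  fixes Q A :: "('a \<Rightarrow> real) \<Rightarrow> real" and C :: real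
  assumes Q_nonneg: "\<And>h. Q h \<ge> 0"
    and A_bounded: "\<And>h. A h \<le> C * sqrt (Q h)"
begin

lemma dual_norm_upper: "A h / sqrt (Q h) \<le> dual_norm Q A"
proof -
  have "A h / sqrt (Q h) \<le> max C 0" for h
  proof (cases "Q h = 0")
    case False
    then have "sqrt (Q h) > 0" using Q_nonneg[of h] by simp
    moreover have "A h \<le> max C 0 * sqrt (Q h)"
      using A_bounded[of h] mult_right_mono[of C "max C 0" "sqrt (Q h)"] Q_nonneg[of h] by simp
    ultimately show ?thesis by (simp add: divide_le_eq)
  qed simp
  then have "bdd_above {A h / sqrt (Q h) | h. True}" by (intro bdd_aboveI[where M="max C 0"]) auto
  then show ?thesis unfolding dual_norm_def by (auto intro: cSup_upper)
qed

lemma dual_norm_sq_ge: "2 * A h - Q h \<le> (dual_norm Q A)^2"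
proof (cases "Q h = 0")
  case True
  then have "A h \<le> 0" using A_bounded[of h] by simp
  moreover have "0 \<le> (dual_norm Q A)^2" by simp
  ultimately show ?thesis using True by linarith
next
  case False
  define N s where "N = dual_norm Q A" and "s = sqrt (Q h)"
  have "s > 0" using False Q_nonneg[of h] by (simp add: s_def)
  then have "A h \<le> N * s" using dual_norm_upper[of h] by (simp add: N_def s_def divide_le_eq)
  moreover have "Q h = s^2" using Q_nonneg[of h] by (simp add: s_def)
  moreover have "2 * N * s - s^2 \<le> N^2" using zero_le_power2[of "N - s"] by (simp add: power2_diff)
  ultimately show ?thesis by (simp add: N_def)
qed

end

lemma dual_norm_least:
  assumes "\<And>h. Q h \<ge> 0" "\<And>h. A h \<le> M * sqrt (Q h)" "M \<ge> 0"
  shows "dual_norm Q A \<le> M"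
  unfolding dual_norm_def
proof (rule cSup_least)
  fix r assume "r \<in> {A h / sqrt (Q h) | h. True}"
  then obtain h where r: "r = A h / sqrt (Q h)" by blast
  show "r \<le> M"
  proof (cases "Q h = 0")
    case False
    then have "sqrt (Q h) > 0" using assms(1)[of h] by simp
    then show ?thesis using assms(2)[of h] by (simp add: r divide_le_eq mult.commute)
  qed (simp add: r assms(3))
qed blast

lemma dual_norm_dirichlet_form_represented:
  assumes W_nonneg: "\<And>x y. (x, y) \<in> E \<Longrightarrow> W x y \<ge> 0"
    and represented: "\<And>h. A h = dirichlet_form E W u h"
  shows "dual_norm (\<lambda>h. dirichlet_form E W h h) A = sqrt (dirichlet_form E W u u)"
proof (rule antisym)
  have nonneg: "\<And>h. dirichlet_form E W h h \<ge> 0" by (rule dirichlet_form_nonneg[OF W_nonneg])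
  have bounded: "A h \<le> sqrt (dirichlet_form E W u u) * sqrt (dirichlet_form E W h h)" for h
  proof -
    have "A h \<le> sqrt ((dirichlet_form E W u h)^2)" by (simp add: represented)
    also have "\<dots> \<le> sqrt (dirichlet_form E W u u * dirichlet_form E W h h)"
      by (rule real_sqrt_le_mono[OF dirichlet_form_Cauchy_Schwarz[OF W_nonneg]])
    finally show ?thesis by (simp add: real_sqrt_mult)
  qed
  show "dual_norm (\<lambda>h. dirichlet_form E W h h) A \<le> sqrt (dirichlet_form E W u u)"
    by (rule dual_norm_least) (use nonneg bounded in auto)
  show "sqrt (dirichlet_form E W u u) \<le> dual_norm (\<lambda>h. dirichlet_form E W h h) A"
    using dual_norm_upper[where Q="\<lambda>h. dirichlet_form E W h h" and A=A and h=u, OF nonneg bounded]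
    by (simp add: represented real_div_sqrt nonneg)
qed

lemma nonpos_if_linear_le_quadratic:
  fixes a b :: real
  assumes "\<And>t. t > 0 \<Longrightarrow> 2 * t * a \<le> t^2 * b"
  shows "a \<le> 0"
proof (rule ccontr)
  assume "\<not> a \<le> 0"
  define t where "t = a / (\<bar>b\<bar> + 1)"
  have "t > 0" using \<open>\<not> a \<le> 0\<close> by (simp add: t_def)
  have "t * b \<le> t * \<bar>b\<bar>" using \<open>t > 0\<close> by (simp add: mult_left_mono)
  also have "\<dots> < a" using \<open>\<not> a \<le> 0\<close> by (simp add: t_def field_simps)
  finally have "t^2 * b < 2 * t * a" using \<open>t > 0\<close> \<open>\<not> a \<le> 0\<close>
    by (simp add: power2_eq_square)
  then show False using assms[OF \<open>t > 0\<close>] by simp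
qed

lemma dual_norm_energy_inequality:
  fixes a r g :: "'a::finite \<Rightarrow> real" and E :: "('a \<times> 'a) set" and W :: "'a \<Rightarrow> 'a \<Rightarrow> real"
  defines "B \<equiv> dirichlet_form E W" and "A \<equiv> \<lambda>h. \<Sum>x\<in>UNIV. a x * h x"
  assumes W_nonneg: "\<And>x y. (x, y) \<in> E \<Longrightarrow> W x y \<ge> 0"
    and A_bounded: "\<And>h. A h \<le> C * sqrt (B h h)"
    and gradient: "\<And>h. B g h = - (\<Sum>x\<in>UNIV. r x * h x)"
  shows "- B g g \<le> 2 * A g + (dual_norm (\<lambda>h. B h h) A)^2"
    and "2 * A g + (dual_norm (\<lambda>h. B h h) A)^2 = - B g g \<longleftrightarrow> a = r"
proof -
  define N where "N = dual_norm (\<lambda>h. B h h) A"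
  have B_nonneg: "\<And>h. B h h \<ge> 0" unfolding B_def by (rule dirichlet_form_nonneg[OF W_nonneg])
  have sq_ge: "\<And>h. 2 * A h - B h h \<le> N^2"
    unfolding N_def by (rule dual_norm_sq_ge[OF B_nonneg A_bounded])
  have A_linear: "\<And>s t h k. A (\<lambda>x. s * h x + t * k x) = s * A h + t * A k"
    unfolding A_def by (simp add: sum.distrib sum_distrib_left algebra_simps)
  have B_quadratic: "\<And>s t h k. B (\<lambda>x. s * h x + t * k x) (\<lambda>x. s * h x + t * k x)
      = s^2 * B h h + 2 * s * t * B h k + t^2 * B k k"
    unfolding B_def by (rule dirichlet_form_quadratic)
  show "- B g g \<le> 2 * A g + N^2"
    using sq_ge[of "\<lambda>x. (-1) * g x + 0 * g x"] A_linear[of "-1" g 0 g] B_quadratic[of "-1" g 0 g]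
    by simp
  show "2 * A g + N^2 = - B g g \<longleftrightarrow> a = r"
  proof
    assume "a = r"
    moreover have "\<And>h. B (\<lambda>x. - g x) h = - B g h"
      using dirichlet_form_linear_left[of E W "-1" g 0 g] by (simp add: B_def)
    ultimately have "\<And>h. A h = B (\<lambda>x. - g x) h" by (simp add: A_def gradient)
    then have "N = sqrt (B g g)"
      using dual_norm_dirichlet_form_represented[where u="\<lambda>x. - g x", OF W_nonneg]
        B_quadratic[of "-1" g 0 g]
      by (simp add: N_def B_def)
    moreover have "A g = - B g g" using gradient[of g] \<open>a = r\<close> by (simp add: A_def)
    ultimately show "2 * A g + N^2 = - B g g" using B_nonneg[of g] by simp
  next
    assume equality: "2 * A g + N^2 = - B g g"
    \<comment> \<open>perturb the optimal test function \<open>-g\<close> in the direction \<open>v\<close>\<close>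
    define v where "v x = a x - r x" for x
    have v_sq: "A v + B g v = (\<Sum>x\<in>UNIV. v x ^ 2)"
      by (simp add: A_def gradient v_def sum_subtractf[symmetric] power2_eq_square algebra_simps)
    have "2 * t * (A v + B g v) \<le> t^2 * B v v" if "t > 0" for t
      using sq_ge[of "\<lambda>x. (-1) * g x + t * v x"] equality
      unfolding A_linear B_quadratic by (simp add: algebra_simps)
    then have "(\<Sum>x\<in>UNIV. v x ^ 2) \<le> 0"
      unfolding v_sq by (rule nonpos_if_linear_le_quadratic)
    then have "\<And>x. v x = 0"
      using sum_nonneg_eq_0_iff[of UNIV "\<lambda>x. v x ^ 2"] sum_nonneg[of UNIV "\<lambda>x. v x ^ 2"] by simp
    then show "a = r" by (simp add: v_def fun_eq_iff)
  qed
qed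

lemma trancl_oscillation_bound:
  fixes N :: "('a \<Rightarrow> real) \<Rightarrow> real"
  assumes edge: "\<And>u v. (u, v) \<in> R \<Longrightarrow> \<exists>C. \<forall>h. \<bar>h v - h u\<bar> \<le> C * N h"
    and path: "(x, y) \<in> R\<^sup>+"
  shows "\<exists>C. \<forall>h. \<bar>h y - h x\<bar> \<le> C * N h"
  using path
proof (induction rule: trancl_induct)
  case (base y)
  then show ?case by (rule edge)
next
  case (step y z)
  obtain C1 where C1: "\<forall>h. \<bar>h y - h x\<bar> \<le> C1 * N h" using step.IH by blast
  obtain C2 where C2: "\<forall>h. \<bar>h z - h y\<bar> \<le> C2 * N h" using edge[OF step.hyps(2)] by blast
  have "\<bar>h z - h x\<bar> \<le> (C1 + C2) * N h" for h
  proof -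
    have "\<bar>h z - h x\<bar> \<le> \<bar>h z - h y\<bar> + \<bar>h y - h x\<bar>"
      using abs_triangle_ineq[of "h z - h y" "h y - h x"] by simp
    also have "\<dots> \<le> C2 * N h + C1 * N h" using C1 C2 by (intro add_mono) auto
    finally show ?thesis by (simp add: distrib_right)
  qed
  then show ?case by blast
qed

lemma zero_sum_functional_bound:
  fixes a :: "'a::finite \<Rightarrow> real" and N :: "('a \<Rightarrow> real) \<Rightarrow> real"
  assumes zero_sum: "(\<Sum>x\<in>UNIV. a x) = 0"
    and oscillation: "\<And>x y. \<exists>C. \<forall>h. \<bar>h y - h x\<bar> \<le> C * N h"
  shows "\<exists>C. \<forall>h. (\<Sum>x\<in>UNIV. a x * h x) \<le> C * N h"
proof -
  fix x0 :: 'a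
  have "\<forall>x. \<exists>C. \<forall>h. \<bar>h x - h x0\<bar> \<le> C * N h" using oscillation by blast
  then obtain Cf where Cf: "\<And>x h. \<bar>h x - h x0\<bar> \<le> Cf x * N h" by metis
  have "(\<Sum>x\<in>UNIV. a x * h x) \<le> (\<Sum>x\<in>UNIV. \<bar>a x\<bar> * Cf x) * N h" for h
  proof -
    have "(\<Sum>x\<in>UNIV. a x * h x) = (\<Sum>x\<in>UNIV. a x * (h x - h x0))"
      using zero_sum by (simp add: right_diff_distrib sum_subtractf sum_distrib_right[symmetric])
    also have "\<dots> \<le> (\<Sum>x\<in>UNIV. \<bar>a x\<bar> * (Cf x * N h))"
    proof (rule sum_mono)
      fix x
      have "a x * (h x - h x0) \<le> \<bar>a x\<bar> * \<bar>h x - h x0\<bar>" by (simp add: abs_mult[symmetric])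
      also have "\<dots> \<le> \<bar>a x\<bar> * (Cf x * N h)" by (rule mult_left_mono[OF Cf]) simp
      finally show "a x * (h x - h x0) \<le> \<bar>a x\<bar> * (Cf x * N h)" .
    qed
    also have "\<dots> = (\<Sum>x\<in>UNIV. \<bar>a x\<bar> * Cf x) * N h" by (simp add: sum_distrib_right mult.assoc)
    finally show ?thesis .
  qed
  then show ?thesis by blast
qed

lemma irreducible_zero_sum_functional_bound:
  fixes Pm :: "'a::finite \<Rightarrow> 'a \<Rightarrow> real" and a :: "'a \<Rightarrow> real"
  defines "E \<equiv> {(x, y). kappa Pm x y > 0}"
  assumes irred: "irreducible_chain Pm"
    and W_pos: "\<And>x y. (x, y) \<in> E \<Longrightarrow> W x y > 0"
    and zero_sum: "(\<Sum>x\<in>UNIV. a x) = 0"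
  shows "\<exists>C. \<forall>h. (\<Sum>x\<in>UNIV. a x * h x) \<le> C * sqrt (dirichlet_form E W h h)"
proof (rule zero_sum_functional_bound[OF zero_sum])
  have edge: "\<exists>C. \<forall>h. \<bar>h v - h u\<bar> \<le> C * sqrt (dirichlet_form E W h h)"
    if "(u, v) \<in> {(u, v). Pm u v > 0}" for u v
  proof (cases "u = v")
    case False
    then have "(u, v) \<in> E" using that by (simp add: E_def kappa_def)
    then have "\<forall>h. \<bar>h v - h u\<bar> \<le> 1 / sqrt (W u v) * sqrt (dirichlet_form E W h h)"
      using dirichlet_form_edge_bound[of E W u v] W_pos by (auto intro: less_imp_le)
    then show ?thesis by blast
  qed (auto intro: exI[of _ 0])
  show "\<exists>C. \<forall>h. \<bar>h y - h x\<bar> \<le> C * sqrt (dirichlet_form E W h h)" for x y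
    using trancl_oscillation_bound[where R="{(u, v). Pm u v > 0}", OF edge] irred
    by (simp add: irreducible_chain_def)
qed

lemma kappa_row_sum:
  assumes "stochastic Pm"
  shows "(\<Sum>y\<in>UNIV. kappa Pm x y) = 0"
  using assms by (simp add: kappa_def stochastic_def sum_subtractf)

lemma kappa_nonneg_off_diagonal:
  assumes "stochastic Pm" "x \<noteq> y"
  shows "kappa Pm x y \<ge> 0"
  using assms by (simp add: kappa_def stochastic_def)

lemma invariant_distribution_pos:
  fixes Pm :: "'a::finite \<Rightarrow> 'a \<Rightarrow> real"
  assumes stoch: "stochastic Pm" and irred: "irreducible_chain Pm"
    and inv: "invariant_distribution Pm q"
  shows "q x > 0"
proof -
  have zero_step: "q u = 0" if "Pm u v > 0" "q v = 0" for u v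
  proof -
    have "(\<Sum>w\<in>UNIV. q w * Pm w v) = 0" using inv that(2) by (simp add: invariant_distribution_def)
    moreover have "\<forall>w\<in>UNIV. q w * Pm w v \<ge> 0"
      using stoch inv by (auto simp: stochastic_def invariant_distribution_def)
    ultimately have "q u * Pm u v = 0" using sum_nonneg_eq_0_iff[of UNIV "\<lambda>w. q w * Pm w v"] by simp
    then show ?thesis using that(1) by simp
  qed
  have zero_path: "q v = 0 \<longrightarrow> q u = 0" if "(u, v) \<in> {(u, v). Pm u v > 0}\<^sup>+" for u v
    using that by (induction rule: trancl_induct) (auto intro: zero_step)
  show ?thesis
  proof (rule ccontr)
    assume "\<not> q x > 0"
    then have "q x = 0" using inv by (auto simp: invariant_distribution_def intro: antisym)
    then have "q u = 0" for u using zero_path[of u x] irred by (auto simp: irreducible_chain_def)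
    then show False using inv by (simp add: invariant_distribution_def)
  qed
qed

lemma dirichlet_form_kappa_integration_by_parts:
  fixes Pm :: "'a::finite \<Rightarrow> 'a \<Rightarrow> real"
  assumes stoch: "stochastic Pm" and db: "\<And>y z. q y * kappa Pm y z = q z * kappa Pm z y"
  shows "dirichlet_form {(x, y). kappa Pm x y > 0} (\<lambda>x y. 1/2 * kappa Pm x y * q x) l h
       = - (\<Sum>y\<in>UNIV. (\<Sum>x\<in>UNIV. kappa Pm x y * (q x * l x)) * h y)"
proof -
  define c where "c x y = q x * kappa Pm x y" for x y
  have c_sym: "c x y = c y x" for x y using db by (simp add: c_def)
  have c_column: "(\<Sum>x\<in>UNIV. c x y) = 0" for y
    unfolding c_sym[of _ y] by (simp add: c_def kappa_row_sum[OF stoch] sum_distrib_left[symmetric])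
  have "dirichlet_form {(x, y). kappa Pm x y > 0} (\<lambda>x y. 1/2 * kappa Pm x y * q x) l h
      = (\<Sum>(x, y)\<in>UNIV. 1/2 * c x y * (l y - l x) * (h y - h x))"
    unfolding dirichlet_form_def
  proof (rule sum.mono_neutral_cong_left)
    have "kappa Pm x y = 0 \<or> x = y" if "\<not> kappa Pm x y > 0" for x y
      using that kappa_nonneg_off_diagonal[OF stoch, of x y] by linarith
    then show "\<forall>i\<in>UNIV - {(x, y). kappa Pm x y > 0}. (\<lambda>(x, y). 1/2 * c x y * (l y - l x) * (h y - h x)) i = 0"
      by (force simp: c_def)
  qed (auto simp: c_def)
  also have "\<dots> = 1/2 * (\<Sum>x\<in>UNIV. \<Sum>y\<in>UNIV. c x y * (l y - l x) * (h y - h x))"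
    by (simp add: sum.cartesian_product[symmetric] UNIV_Times_UNIV[symmetric] sum_distrib_left
        mult.assoc del: UNIV_Times_UNIV)
  also have "(\<Sum>x\<in>UNIV. \<Sum>y\<in>UNIV. c x y * (l y - l x) * (h y - h x))
      = (\<Sum>x\<in>UNIV. \<Sum>y\<in>UNIV. c x y * (l y - l x) * h y)
        - (\<Sum>x\<in>UNIV. \<Sum>y\<in>UNIV. c x y * (l y - l x) * h x)"
    by (simp add: right_diff_distrib sum_subtractf)
  also have "(\<Sum>x\<in>UNIV. \<Sum>y\<in>UNIV. c x y * (l y - l x) * h x)
      = - (\<Sum>x\<in>UNIV. \<Sum>y\<in>UNIV. c x y * (l y - l x) * h y)"
    by (subst sum.swap) (simp add: c_sym[of _ "_ :: 'a"] sum_negf[symmetric] algebra_simps)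
  also have "(\<Sum>x\<in>UNIV. \<Sum>y\<in>UNIV. c x y * (l y - l x) * h y)
      = (\<Sum>y\<in>UNIV. l y * h y * (\<Sum>x\<in>UNIV. c x y)) - (\<Sum>y\<in>UNIV. (\<Sum>x\<in>UNIV. c x y * l x) * h y)"
    by (subst sum.swap) (simp add: sum_distrib_left sum_distrib_right sum_subtractf[symmetric] algebra_simps)
  finally show ?thesis by (simp add: c_column) (simp add: c_def algebra_simps)
qed

lemma Theta_secant:
  fixes phi phi2 :: "real \<Rightarrow> real"
  assumes phi_deriv: "\<And>x. x > 0 \<Longrightarrow> (phi has_real_derivative phi2 x) (at x)"
    and phi2_pos: "\<And>x. x > 0 \<Longrightarrow> phi2 x > 0"
    and "a > 0" "b > 0"
  shows "Theta phi phi2 a b > 0" and "Theta phi phi2 a b * (phi b - phi a) = b - a"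
proof -
  have increasing: "phi u < phi v" if "0 < u" "u < v" for u v
    using that(2)
  proof (rule DERIV_pos_imp_increasing)
    fix x assume "u \<le> x"
    then have "x > 0" using that(1) by simp
    then show "\<exists>y. (phi has_real_derivative y) (at x) \<and> y > 0" using phi_deriv phi2_pos by blast
  qed
  consider "a = b" | "a < b" | "b < a" by linarith
  then have "Theta phi phi2 a b > 0 \<and> Theta phi phi2 a b * (phi b - phi a) = b - a"
  proof cases
    case 2
    then show ?thesis using increasing[of a b] \<open>a > 0\<close> by (simp add: Theta_def field_simps)
  next
    case 3
    then show ?thesis using increasing[of b a] \<open>b > 0\<close> by (simp add: Theta_def field_simps)
  qed (simp add: Theta_def phi2_pos \<open>b > 0\<close>)
  then show "Theta phi phi2 a b > 0" and "Theta phi phi2 a b * (phi b - phi a) = b - a" by auto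
qed

lemma dirichlet_form_Theta_integration_by_parts:
  fixes Pm :: "'a::finite \<Rightarrow> 'a \<Rightarrow> real"
  assumes stoch: "stochastic Pm" and db: "\<And>y z. q y * kappa Pm y z = q z * kappa Pm z y"
    and phi_deriv: "\<And>x. x > 0 \<Longrightarrow> (phi has_real_derivative phi2 x) (at x)"
    and phi2_pos: "\<And>x. x > 0 \<Longrightarrow> phi2 x > 0"
    and l_pos: "\<And>x. l x > 0"
  shows "dirichlet_form {(x, y). kappa Pm x y > 0}
      (\<lambda>x y. 1/2 * kappa Pm x y * q x * Theta phi phi2 (l x) (l y)) (\<lambda>x. phi (l x)) h
    = - (\<Sum>y\<in>UNIV. (\<Sum>x\<in>UNIV. kappa Pm x y * (q x * l x)) * h y)"
proof -
  have "dirichlet_form {(x, y). kappa Pm x y > 0}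
      (\<lambda>x y. 1/2 * kappa Pm x y * q x * Theta phi phi2 (l x) (l y)) (\<lambda>x. phi (l x)) h
    = dirichlet_form {(x, y). kappa Pm x y > 0} (\<lambda>x y. 1/2 * kappa Pm x y * q x) l h"
    using Theta_secant(2)[OF phi_deriv phi2_pos l_pos l_pos]
    by (intro dirichlet_form_change_weight) (simp add: mult.assoc)
  also have "\<dots> = - (\<Sum>y\<in>UNIV. (\<Sum>x\<in>UNIV. kappa Pm x y * (q x * l x)) * h y)"
    by (rule dirichlet_form_kappa_integration_by_parts[OF stoch db])
  finally show ?thesis .
qed

lemma Hphi_has_real_derivative:
  fixes Pt :: "real \<Rightarrow> 'a::finite \<Rightarrow> real"
  assumes q_pos: "\<And>y. q y > 0"
    and Phi_deriv: "\<And>y. (Phi has_real_derivative phi (Pt t y / q y)) (at (Pt t y / q y))"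
    and curve_deriv: "\<And>y. ((\<lambda>s. Pt s y) has_real_derivative dP y) (at t within S)"
  shows "((\<lambda>s. Hphi Phi (Pt s) q) has_real_derivative (\<Sum>y\<in>UNIV. dP y * phi (Pt t y / q y)))
      (at t within S)"
proof -
  have "((\<lambda>s. Hphi Phi (Pt s) q) has_real_derivative
      (\<Sum>y\<in>UNIV. q y * (phi (Pt t y / q y) * (dP y / q y)))) (at t within S)"
    unfolding Hphi_def
    by (intro DERIV_sum DERIV_cmult DERIV_chain2[where f=Phi] Phi_deriv DERIV_cdivide curve_deriv)
  moreover have "q y * (phi (Pt t y / q y) * (dP y / q y)) = dP y * phi (Pt t y / q y)" for y
    using q_pos[of y] by simp
  ultimately show ?thesis by simp
qed

lemma probM_curve_tangent_sum_zero:
  assumes curveM: "\<And>t. t \<ge> 0 \<Longrightarrow> Pt t \<in> probM"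
    and curve_deriv: "\<And>x. ((\<lambda>s. Pt s x) has_real_derivative dP x) (at 0 within {0..})"
  shows "(\<Sum>x\<in>UNIV. dP x) = 0"
proof (rule has_field_derivative_unique)
  show "((\<lambda>s. \<Sum>x\<in>UNIV. Pt s x) has_real_derivative (\<Sum>x\<in>UNIV. dP x)) (at 0 within {0..})"
    by (intro DERIV_sum curve_deriv)
  show "((\<lambda>s. \<Sum>x\<in>UNIV. Pt s x) has_real_derivative 0) (at 0 within {0..})"
    by (rule has_field_derivative_transform_within[of "\<lambda>_. 1" 0 0 "{0..}" 1])
      (use curveM in \<open>auto simp: probM_def\<close>)
qed (simp add: at_within_Ici_at_right)

lemma H1sq_eq_dirichlet_form:
  "H1sq Pm q phi phi2 l = (\<lambda>f. dirichlet_form {(x, y). kappa Pm x y > 0}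
      (\<lambda>x y. 1/2 * kappa Pm x y * q x * Theta phi phi2 (l x) (l y)) f f)"
  by (simp add: fun_eq_iff H1sq_def dirichlet_form_def power2_eq_square mult.assoc)

lemma Hm1norm_eq_dual_norm:
  assumes "\<And>x. q x \<noteq> 0"
  shows "Hm1norm Pm q phi phi2 l (\<lambda>x. f x / q x)
      = dual_norm (H1sq Pm q phi phi2 l) (\<lambda>h. \<Sum>x\<in>UNIV. f x * h x)"
  using assms by (simp add: Hm1norm_def H1norm_def dual_norm_def)

theorem theorem9p2:
  fixes Pm :: "'a::finite \<Rightarrow> 'a \<Rightarrow> real"
    and q :: "'a \<Rightarrow> real"
    and Phi phi phi2 :: "real \<Rightarrow> real"
    and p :: "'a \<Rightarrow> real"
    and Pt dPt :: "real \<Rightarrow> 'a \<Rightarrow> real"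
    and dH :: real
  assumes stoch: "stochastic Pm"
    and irred: "irreducible_chain Pm"
    and inv: "invariant_distribution Pm q"
    and db: "\<And>y z. q y * kappa Pm y z = q z * kappa Pm z y"
    and Phi_convex: "convex_on {0<..} Phi"
    and Phi_deriv: "\<And>x. x > 0 \<Longrightarrow> (Phi has_real_derivative phi x) (at x)"
    and phi_deriv: "\<And>x. x > 0 \<Longrightarrow> (phi has_real_derivative phi2 x) (at x)"
    and phi_cont: "continuous_on {0<..} phi"
    and phi2_cont: "continuous_on {0<..} phi2"
    and phi2_pos: "\<And>x. x > 0 \<Longrightarrow> phi2 x > 0"
    and Phi1: "Phi 1 = 0"
    and pM: "p \<in> probM"
    and curveM: "\<And>t. t \<ge> 0 \<Longrightarrow> Pt t \<in> probM"
    and curve0: "Pt 0 = p"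
    and curve_deriv: "\<And>t x. t \<ge> 0 \<Longrightarrow>
        ((\<lambda>s. Pt s x) has_real_derivative dPt t x) (at t within {0..})"
    and H_deriv: "((\<lambda>t. Hphi Phi (Pt t) q) has_real_derivative dH) (at 0 within {0..})"
  shows "(2 * dH + (Hm1norm Pm q phi phi2 (\<lambda>x. p x / q x) (\<lambda>x. dPt 0 x / q x))^2
           \<ge> - H1sq Pm q phi phi2 (\<lambda>x. p x / q x) (\<lambda>x. phi (p x / q x)))
       \<and> (2 * dH + (Hm1norm Pm q phi phi2 (\<lambda>x. p x / q x) (\<lambda>x. dPt 0 x / q x))^2
           = - H1sq Pm q phi phi2 (\<lambda>x. p x / q x) (\<lambda>x. phi (p x / q x))
         \<longleftrightarrow> (\<forall>y. dPt 0 y = (\<Sum>x\<in>UNIV. kappa Pm x y * Pt 0 x)))"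
proof -
  define l where "l = (\<lambda>x. p x / q x)"
  define E where "E = {(x, y). kappa Pm x y > 0}"
  define W where "W = (\<lambda>x y. 1/2 * kappa Pm x y * q x * Theta phi phi2 (l x) (l y))"
  define B where "B = dirichlet_form E W"
  have q_pos: "\<And>x. q x > 0" by (rule invariant_distribution_pos[OF stoch irred inv])
  have l_pos: "\<And>x. l x > 0" using pM q_pos by (simp add: l_def probM_def)
  have W_pos: "\<And>x y. (x, y) \<in> E \<Longrightarrow> W x y > 0"
    using q_pos Theta_secant(1)[OF phi_deriv phi2_pos l_pos l_pos] by (simp add: W_def E_def)
  have H1: "H1sq Pm q phi phi2 l = (\<lambda>f. B f f)"
    unfolding H1sq_eq_dirichlet_form B_def E_def W_def ..
  have Hm1: "Hm1norm Pm q phi phi2 l (\<lambda>x. dPt 0 x / q x)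
      = dual_norm (\<lambda>h. B h h) (\<lambda>h. \<Sum>x\<in>UNIV. dPt 0 x * h x)"
    unfolding Hm1norm_eq_dual_norm[OF less_imp_neq[OF q_pos, symmetric]] H1 ..
  have "((\<lambda>t. Hphi Phi (Pt t) q) has_real_derivative (\<Sum>x\<in>UNIV. dPt 0 x * phi (Pt 0 x / q x)))
      (at 0 within {0..})"
    by (rule Hphi_has_real_derivative)
      (use q_pos Phi_deriv l_pos curve_deriv in \<open>auto simp: curve0 l_def\<close>)
  then have dH: "dH = (\<Sum>x\<in>UNIV. dPt 0 x * phi (l x))"
    unfolding curve0 l_def
    by (rule has_field_derivative_unique[OF H_deriv]) (simp add: at_within_Ici_at_right)
  obtain C where bounded: "\<And>h. (\<Sum>x\<in>UNIV. dPt 0 x * h x) \<le> C * sqrt (B h h)"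
    using irreducible_zero_sum_functional_bound[OF irred, of W "dPt 0"] W_pos
      probM_curve_tangent_sum_zero[OF curveM curve_deriv]
    by (auto simp: B_def E_def)
  have gradient: "B (\<lambda>x. phi (l x)) h = - (\<Sum>y\<in>UNIV. (\<Sum>x\<in>UNIV. kappa Pm x y * Pt 0 x) * h y)" for h
    using dirichlet_form_Theta_integration_by_parts[OF stoch db phi_deriv phi2_pos l_pos] q_pos
    by (simp add: B_def E_def W_def l_def curve0 less_imp_neq[symmetric])
  show ?thesis
    using dual_norm_energy_inequality[OF less_imp_le[OF W_pos] bounded[unfolded B_def]
        gradient[unfolded B_def]]
    unfolding l_def[symmetric] H1 Hm1 B_def dH by (simp add: l_def fun_eq_iff)
qed

end
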